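(* Let $(A,B)$ be a random vector with $\mathbb P\{A\in(0,1]\}=1$, $\mathbb P\{B>x\}\sim ax^ce^{-bx}$ as $x\to\infty$ for some $a,b>0$ and $c<-1$, $\mathbb E e^{bB}\mathbf 1_{\{A=1\}}<1$, and suppose there is a nonnegative measurable $f$ with $\mathbb P\{Ay+B>x\}\sim f(y)\mathbb P\{B>x\}$ as $x\to\infty$ for each $y\in\mathbb R$. Let $Y$ be a random variable independent of $(A,B)$ with $\mathbb P\{Y>x\}\sim c_Y\mathbb P\{B>x\}$ as $x\to\infty$ for some constant $c_Y>0$. Then $\mathbb E f(Y)<\infty$ and $$\mathbb P\{AY+B>x\}\sim\big(c_Y\,\mathbb E e^{bB}\mathbf 1_{\{A=1\}}+\mathbb E f(Y)\big)\mathbb P\{B>x\},\quad x\to\infty.$$ *)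

theory Defs
  imports "HOL-Probability.Probability" "HOL-Library.Landau_Symbols"
begin

end

theory Submission
  imports Defs "HOL-Real_Asymp.Real_Asymp"
begin

text \<open>
  Split the event \<open>{AY + B > x}\<close> at a level \<open>K\<close>. On \<open>{Y \<le> K}\<close>, conditioning on \<open>Y\<close> and dominated
  convergence give \<open>E f(Y) 1{Y \<le> K}\<close>. On \<open>{Y > K, B \<le> K}\<close>, conditioning on \<open>(A, B)\<close> reduces the
  event to \<open>{Y > (x - B) / A}\<close>; since the tail of \<open>Y\<close> is of type \<open>x\<^sup>c e\<^sup>-\<^sup>b\<^sup>x\<close>, its ratio to
  \<open>P{B > x}\<close> tends to \<open>c\<^sub>Y e\<^sup>b\<^sup>B\<close> where \<open>A = 1\<close> and to \<open>0\<close> where \<open>A < 1\<close>. On the remaining event both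
  \<open>Y\<close> and \<open>B\<close> exceed \<open>K\<close>, and one of them exceeds \<open>x/2\<close>; this part is at most a constant times
  \<open>(E e\<^sup>b\<^sup>Y 1{Y > K} + E e\<^sup>b\<^sup>B 1{B > K}) P{B > x}\<close>, where the exponential moments are finite because
  \<open>c < -1\<close>. Letting \<open>K \<rightarrow> \<infinity>\<close> gives the claim.
\<close>

lemma (in prob_space) indep_var_commute:
  assumes "indep_var S X T W"
  shows "indep_var T W S X"
  using assms unfolding indep_var_eq indep_sets2_eq
  by (auto, subst Int_commute, subst mult.commute, blast)

lemma (in prob_space) integral_distr_indicator_section:
  assumes W_meas[measurable]: "W \<in> measurable M T"
    and P[measurable]: "Measurable.pred (S \<Otimes>\<^sub>M T) (\<lambda>p. P (fst p) (snd p))"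
    and x: "x \<in> space S"
  shows "(\<integral>y. indicator {p \<in> space (S \<Otimes>\<^sub>M T). P (fst p) (snd p)} (x, y) \<partial>distr M T W)
    = prob {\<omega>\<in>space M. P x (W \<omega>)}"
proof -
  define Q where "Q = {p \<in> space (S \<Otimes>\<^sub>M T). P (fst p) (snd p)}"
  have [measurable]: "Q \<in> sets (S \<Otimes>\<^sub>M T)"
    unfolding Q_def by measurable
  have "(\<integral>y. indicator Q (x, y) \<partial>distr M T W) = (\<integral>\<omega>. indicator Q (x, W \<omega>) \<partial>M :: real)"
  proof (subst integral_distr)
    show "(\<lambda>y. indicator Q (x, y) :: real) \<in> borel_measurable T"
      using x by measurable
  qed simp_all
  also have "\<dots> = (\<integral>\<omega>. indicator {\<omega>\<in>space M. P x (W \<omega>)} \<omega> \<partial>M)"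
    using x by (intro Bochner_Integration.integral_cong refl)
      (auto simp: indicator_def Q_def space_pair_measure measurable_space[OF W_meas])
  also have "\<dots> = prob {\<omega>\<in>space M. P x (W \<omega>)}"
  proof -
    have "Measurable.pred M (\<lambda>\<omega>. P x (W \<omega>))"
      using measurable_compose[OF _ P, of "\<lambda>\<omega>. (x, W \<omega>)" M] x by simp
    then have "{\<omega>\<in>space M. P x (W \<omega>)} \<in> events"
      by measurable
    then show ?thesis
      by simp
  qed
  finally show ?thesis
    unfolding Q_def .
qed

lemma (in prob_space) prob_indep_eq_expectation:
  assumes ind: "indep_var S X T W"
    and P[measurable]: "Measurable.pred (S \<Otimes>\<^sub>M T) (\<lambda>p. P (fst p) (snd p))"
  shows "prob {\<omega>\<in>space M. P (X \<omega>) (W \<omega>)} = expectation (\<lambda>\<omega>. prob {\<omega>'\<in>space M. P (X \<omega>) (W \<omega>')})"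
    and "(\<lambda>\<omega>. prob {\<omega>'\<in>space M. P (X \<omega>) (W \<omega>')}) \<in> borel_measurable M"
proof -
  have X_meas[measurable]: "X \<in> measurable M S" and W_meas[measurable]: "W \<in> measurable M T"
    using indep_var_rv1[OF ind] indep_var_rv2[OF ind] .
  define D1 where "D1 = distr M S X"
  define D2 where "D2 = distr M T W"
  interpret D1: prob_space D1 unfolding D1_def by (rule prob_space_distr) measurable
  interpret D2: prob_space D2 unfolding D2_def by (rule prob_space_distr) measurable
  interpret D: pair_prob_space D1 D2 ..
  define Q where "Q = {p \<in> space (S \<Otimes>\<^sub>M T). P (fst p) (snd p)}"
  have Q_ST[measurable]: "Q \<in> sets (S \<Otimes>\<^sub>M T)"
    unfolding Q_def by measurable
  have Q: "Q \<in> sets (D1 \<Otimes>\<^sub>M D2)"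
    unfolding D1_def D2_def by (subst sets_pair_measure_cong[of _ S _ T]) simp_all
  define g where "g x = prob {\<omega>'\<in>space M. P x (W \<omega>')}" for x
  have g_eq: "(\<integral>y. indicator Q (x, y) \<partial>D2) = g x" if "x \<in> space S" for x
    unfolding Q_def D2_def g_def using that by (rule integral_distr_indicator_section[OF W_meas P])
  have g_meas[measurable]: "g \<in> borel_measurable S"
  proof -
    have "(\<lambda>x. \<integral>y. indicator Q (x, y) \<partial>D2 :: real) \<in> borel_measurable D1"
      using Q by (intro D2.borel_measurable_lebesgue_integral) (simp add: split_beta')
    then have "(\<lambda>x. \<integral>y. indicator Q (x, y) \<partial>D2 :: real) \<in> borel_measurable S"
      by (simp add: D1_def)
    then show ?thesis
      by (rule measurable_cong[THEN iffD1, rotated]) (simp add: g_eq)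
  qed
  have "prob {\<omega>\<in>space M. P (X \<omega>) (W \<omega>)} = measure (D1 \<Otimes>\<^sub>M D2) Q"
    using ind Q unfolding D1_def D2_def indep_var_distribution_eq
    by (simp add: measure_distr Q_def space_pair_measure)
      (auto intro!: arg_cong[where f=prob] simp: measurable_space[OF X_meas] measurable_space[OF W_meas])
  also have "\<dots> = (\<integral>x. \<integral>y. indicator Q (x, y) \<partial>D2 \<partial>D1)"
    using Q by (simp add: D.emeasure_finite D.integral_fst' D.integrable_const_bound[where B=1])
  also have "\<dots> = (\<integral>x. g x \<partial>D1)"
    by (intro Bochner_Integration.integral_cong refl) (simp add: D1_def g_eq)
  also have "\<dots> = expectation (\<lambda>\<omega>. g (X \<omega>))"
    unfolding D1_def by (rule integral_distr) measurable
  finally show "prob {\<omega>\<in>space M. P (X \<omega>) (W \<omega>)} = expectation (\<lambda>\<omega>. prob {\<omega>'\<in>space M. P (X \<omega>) (W \<omega>')})"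
    unfolding g_def .
  show "(\<lambda>\<omega>. prob {\<omega>'\<in>space M. P (X \<omega>) (W \<omega>')}) \<in> borel_measurable M"
  proof -
    have "(\<lambda>\<omega>. g (X \<omega>)) \<in> borel_measurable M" by measurable
    then show ?thesis unfolding g_def .
  qed
qed

lemma tendsto_ratio_of_asymp_equiv:
  fixes F G g h u :: "real \<Rightarrow> real"
  assumes "G \<sim>[at_top] g" "F \<sim>[at_top] h" "filterlim u at_top at_top"
    and "((\<lambda>x. g (u x) / h x) \<longlongrightarrow> L) at_top"
  shows "((\<lambda>x. G (u x) / F x) \<longlongrightarrow> L) at_top"
proof -
  have "(\<lambda>x. G (u x) / F x) \<sim>[at_top] (\<lambda>x. g (u x) / h x)"
    by (intro asymp_equiv_divide asymp_equiv_compose'[OF assms(1,3)] assms(2))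
  with assms(4) show ?thesis
    using tendsto_asymp_equiv_cong by blast
qed

lemma exp_tail_shift_ratio:
  fixes b c s :: real
  shows "((\<lambda>x. (x + s) powr c * exp (- b * (x + s)) / (x powr c * exp (- b * x)))
          \<longlongrightarrow> exp (- b * s)) at_top"
proof -
  have "((\<lambda>x. ((x + s) / x) powr c * exp (- b * s)) \<longlongrightarrow> exp (- b * s)) at_top"
    by real_asymp
  moreover have "eventually (\<lambda>x. ((x + s) / x) powr c * exp (- b * s)
      = (x + s) powr c * exp (- b * (x + s)) / (x powr c * exp (- b * x))) at_top"
    using eventually_gt_at_top[of "max 0 (- s)"]
  proof eventually_elim
    case (elim x)
    have "exp (- b * (x + s)) = exp (- b * s) * exp (- b * x)"
      by (simp add: exp_add[symmetric] algebra_simps)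
    with elim show ?case by (simp add: powr_divide)
  qed
  ultimately show ?thesis
    by (rule Lim_transform_eventually)
qed

lemma exp_tail_dilation_ratio:
  fixes b c s u :: real
  assumes "u > 1" "b > 0"
  shows "((\<lambda>x. (u * x + s) powr c * exp (- b * (u * x + s)) / (x powr c * exp (- b * x)))
          \<longlongrightarrow> 0) at_top"
  using assms by real_asymp

lemma exp_le_level_sum:
  fixes b t0 x :: real
  assumes "b > 0"
  shows "ennreal (exp (b * x)) \<le> ennreal (exp (b * t0))
           + (\<Sum>n. ennreal (exp (b * (t0 + real n + 1))) * indicator {t0 + real n<..} x)"
proof (cases "x \<le> t0")
  case True
  then have "ennreal (exp (b * x)) \<le> ennreal (exp (b * t0))"
    using assms by (simp add: ennreal_leI)
  then show ?thesis
    by (rule order_trans) (rule add_increasing2, auto)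
next
  case False
  define n where "n = nat (\<lceil>x - t0\<rceil> - 1)"
  have "real n = of_int \<lceil>x - t0\<rceil> - 1"
    using False by (simp add: n_def one_le_ceiling)
  then have n: "t0 + real n < x" "x \<le> t0 + real n + 1"
    using ceiling_correct[of "x - t0"] by linarith+
  define e where "e k = ennreal (exp (b * (t0 + real k + 1))) * indicator {t0 + real k<..} x" for k
  have "ennreal (exp (b * x)) \<le> e n"
    using n assms by (simp add: e_def ennreal_leI)
  also have "\<dots> \<le> suminf e"
    using sum_le_suminf[OF summableI, of "{n}" e] by simp
  finally show ?thesis
    unfolding e_def by (rule order_trans) (rule add_increasing, auto)
qed

lemma (in prob_space) integrable_exp_of_tail_bound:
  fixes X :: "'a \<Rightarrow> real"
  assumes X_meas[measurable]: "X \<in> borel_measurable M" and "b > 0" "c < -1" and C: "C \<ge> 0"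
    and tail: "eventually (\<lambda>t. prob {\<omega>\<in>space M. X \<omega> > t} \<le> C * t powr c * exp (- b * t)) at_top"
  shows "integrable M (\<lambda>\<omega>. exp (b * X \<omega>))"
proof (rule integrableI_bounded)
  obtain t0 where t0: "t0 \<ge> 1"
    and tail_t0: "\<And>t. t \<ge> t0 \<Longrightarrow> prob {\<omega>\<in>space M. X \<omega> > t} \<le> C * t powr c * exp (- b * t)"
    using eventually_conj[OF tail eventually_ge_at_top[of 1]]
    unfolding eventually_at_top_linorder by (metis order.trans linorder_linear)
  define S where "S n = {\<omega>\<in>space M. X \<omega> > t0 + real n}" for n
  have [measurable]: "S n \<in> events" for n
    unfolding S_def by measurable
  define E where "E n = exp (b * (t0 + real n + 1))" for n
  have cover: "ennreal (norm (exp (b * X \<omega>))) \<le> ennreal (exp (b * t0)) + (\<Sum>n. ennreal (E n) * indicator (S n) \<omega>)"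
    if "\<omega> \<in> space M" for \<omega>
    using exp_le_level_sum[OF \<open>b > 0\<close>, of "X \<omega>" t0] that
    by (simp add: E_def S_def indicator_def)
  have term_le: "ennreal (E n) * emeasure M (S n) \<le> ennreal (C * exp b * real (Suc n) powr c)" for n
  proof -
    have "E n * prob (S n) \<le> E n * (C * (t0 + real n) powr c * exp (- b * (t0 + real n)))"
      unfolding S_def using tail_t0[of "t0 + real n"] by (intro mult_left_mono) (simp_all add: E_def)
    also have "\<dots> = C * exp b * (t0 + real n) powr c"
      unfolding E_def by (simp add: exp_add[symmetric] algebra_simps)
    also have "\<dots> \<le> C * exp b * real (Suc n) powr c"
      using t0 \<open>c < -1\<close> C by (intro mult_left_mono powr_mono2') auto
    finally show ?thesis
      by (simp add: emeasure_eq_measure ennreal_mult[symmetric] E_def ennreal_leI)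
  qed
  have "summable (\<lambda>n. real (Suc n) powr c)"
    using summable_real_powr_iff[of c] \<open>c < -1\<close> by (subst summable_Suc_iff) simp
  then have summable: "summable (\<lambda>n. C * exp b * real (Suc n) powr c)"
    by (simp add: summable_mult mult.assoc)
  have "(\<integral>\<^sup>+\<omega>. ennreal (norm (exp (b * X \<omega>))) \<partial>M)
      \<le> (\<integral>\<^sup>+\<omega>. ennreal (exp (b * t0)) + (\<Sum>n. ennreal (E n) * indicator (S n) \<omega>) \<partial>M)"
    by (rule nn_integral_mono) (rule cover)
  also have "\<dots> = ennreal (exp (b * t0)) + (\<Sum>n. ennreal (E n) * emeasure M (S n))"
    by (simp add: nn_integral_add nn_integral_suminf nn_integral_cmult_indicator emeasure_space_1)
  also have "\<dots> \<le> ennreal (exp (b * t0)) + (\<Sum>n. ennreal (C * exp b * real (Suc n) powr c))"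
    by (intro add_left_mono suminf_le summableI term_le)
  also have "\<dots> = ennreal (exp (b * t0)) + ennreal (\<Sum>n. C * exp b * real (Suc n) powr c)"
    using summable C by (subst suminf_ennreal2) auto
  finally show "(\<integral>\<^sup>+\<omega>. ennreal (norm (exp (b * X \<omega>))) \<partial>M) < \<infinity>"
    by (simp add: order_le_less_trans)
  show "(\<lambda>\<omega>. exp (b * X \<omega>)) \<in> borel_measurable M" by measurable
qed

lemma (in prob_space) tendsto_expectation_truncated:
  fixes X Z :: "'a \<Rightarrow> real"
  assumes X: "integrable M X" and [measurable]: "Z \<in> borel_measurable M"
  shows "((\<lambda>K. expectation (\<lambda>\<omega>. X \<omega> * indicator {\<omega>\<in>space M. Z \<omega> \<le> K} \<omega>)) \<longlongrightarrow> expectation X) at_top"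
proof (rule integral_dominated_convergence_at_top[where w="\<lambda>\<omega>. norm (X \<omega>)"])
  have [measurable]: "X \<in> borel_measurable M"
    using X by (rule borel_measurable_integrable)
  show "X \<in> borel_measurable M" by measurable
  show "(\<lambda>\<omega>. X \<omega> * indicator {\<omega>\<in>space M. Z \<omega> \<le> K} \<omega>) \<in> borel_measurable M" for K
    by measurable
  show "integrable M (\<lambda>\<omega>. norm (X \<omega>))"
    using X by simp
  show "AE \<omega> in M. ((\<lambda>K. X \<omega> * indicator {\<omega>\<in>space M. Z \<omega> \<le> K} \<omega>) \<longlongrightarrow> X \<omega>) at_top"
  proof (rule AE_I2)
    fix \<omega> assume "\<omega> \<in> space M"
    have "eventually (\<lambda>K. X \<omega> * indicator {\<omega>\<in>space M. Z \<omega> \<le> K} \<omega> = X \<omega>) at_top"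
      using eventually_ge_at_top[of "Z \<omega>"] by eventually_elim (simp add: \<open>\<omega> \<in> space M\<close>)
    then show "((\<lambda>K. X \<omega> * indicator {\<omega>\<in>space M. Z \<omega> \<le> K} \<omega>) \<longlongrightarrow> X \<omega>) at_top"
      by (rule tendsto_eventually)
  qed
  show "\<forall>\<^sub>F K in at_top. AE \<omega> in M. norm (X \<omega> * indicator {\<omega>\<in>space M. Z \<omega> \<le> K} \<omega>) \<le> norm (X \<omega>)"
    by (intro always_eventually allI AE_I2) (simp add: indicator_def)
qed

lemma (in prob_space) tendsto_expectation_tail_truncated:
  fixes X Z :: "'a \<Rightarrow> real"
  assumes X: "integrable M X" and [measurable]: "Z \<in> borel_measurable M"
  shows "((\<lambda>K. expectation (\<lambda>\<omega>. X \<omega> * indicator {\<omega>\<in>space M. Z \<omega> > K} \<omega>)) \<longlongrightarrow> 0) at_top"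
proof -
  have trunc: "integrable M (\<lambda>\<omega>. X \<omega> * indicator {\<omega>\<in>space M. Z \<omega> \<le> K} \<omega>)" for K
    using integrable_mult_indicator[of "{\<omega>\<in>space M. Z \<omega> \<le> K}" M X] X by (simp add: mult.commute)
  have "expectation (\<lambda>\<omega>. X \<omega> * indicator {\<omega>\<in>space M. Z \<omega> > K} \<omega>)
      = expectation X - expectation (\<lambda>\<omega>. X \<omega> * indicator {\<omega>\<in>space M. Z \<omega> \<le> K} \<omega>)" for K
  proof -
    have "expectation (\<lambda>\<omega>. X \<omega> * indicator {\<omega>\<in>space M. Z \<omega> > K} \<omega>)
        = expectation (\<lambda>\<omega>. X \<omega> - X \<omega> * indicator {\<omega>\<in>space M. Z \<omega> \<le> K} \<omega>)"
      by (intro Bochner_Integration.integral_cong) (auto simp: indicator_def)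
    then show ?thesis
      using Bochner_Integration.integral_diff[OF X trunc] by simp
  qed
  then show ?thesis
    using tendsto_diff[OF tendsto_const[of "expectation X"] tendsto_expectation_truncated[OF assms]] by simp
qed

lemma tendsto_of_approximations:
  fixes g :: "'a \<Rightarrow> real" and u :: "real \<Rightarrow> 'a \<Rightarrow> real"
  assumes lim: "\<And>K. K \<ge> K' \<Longrightarrow> (u K \<longlongrightarrow> l K) F"
    and err: "\<And>K. K \<ge> K' \<Longrightarrow> eventually (\<lambda>x. \<bar>g x - u K x\<bar> \<le> r K) F"
    and "(l \<longlongrightarrow> L) at_top" and "(r \<longlongrightarrow> 0) at_top"
  shows "(g \<longlongrightarrow> L) F"
proof (rule tendstoI)
  fix e :: real assume "e > 0"
  then have e3: "e / 3 > 0" by simp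
  have "eventually (\<lambda>K. dist (l K) L < e / 3 \<and> r K < e / 3 \<and> K \<ge> K') at_top"
    using tendstoD[OF \<open>(l \<longlongrightarrow> L) at_top\<close> e3] order_tendstoD(2)[OF \<open>(r \<longlongrightarrow> 0) at_top\<close> e3]
      eventually_ge_at_top[of K']
    by eventually_elim simp
  then obtain K where K: "dist (l K) L < e / 3" "r K < e / 3" "K \<ge> K'"
    by (auto simp: eventually_at_top_linorder)
  show "eventually (\<lambda>x. dist (g x) L < e) F"
    using tendstoD[OF lim[OF K(3)] e3] err[OF K(3)]
  proof eventually_elim
    case (elim x)
    then show ?case
      using K(1,2) unfolding dist_real_def by arith
  qed
qed

lemma exp_tail_bound_shifted:
  fixes T :: "real \<Rightarrow> real"
  assumes bound: "\<And>t. t \<ge> t0 \<Longrightarrow> T t \<le> C * (t powr c * exp (- b * t))"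
    and "t0 > 0" "c \<le> 0" "C \<ge> 0" "b \<ge> 0" "2 * t0 \<le> x" "x / 2 \<le> w" "x - z \<le> w"
  shows "T w \<le> C * ((x / 2) powr c * exp (- b * x)) * exp (b * z)"
proof -
  have "T w \<le> C * (w powr c * exp (- b * w))"
    using assms by (intro bound) simp
  also have "\<dots> \<le> C * ((x / 2) powr c * exp (- b * (x - z)))"
    using assms by (intro mult_left_mono mult_mono powr_mono2') (auto intro: mult_left_mono)
  also have "exp (- b * (x - z)) = exp (- b * x) * exp (b * z)"
    by (simp add: exp_add[symmetric] algebra_simps)
  finally show ?thesis
    by (simp add: mult.assoc)
qed

lemma affine_gt_iff:
  fixes \<alpha> \<beta> K x y :: real
  assumes "0 < \<alpha>" "\<alpha> \<le> 1" "\<beta> \<le> K" "2 * K \<le> x" "0 \<le> K"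
  shows "\<alpha> * y + \<beta> > x \<and> y > K \<longleftrightarrow> y > (x - \<beta>) / \<alpha>"
proof -
  have "y > (x - \<beta>) / \<alpha> \<longleftrightarrow> \<alpha> * y + \<beta> > x"
    using assms by (simp add: pos_divide_less_eq algebra_simps)
  moreover have "x - \<beta> \<le> (x - \<beta>) / \<alpha>"
    using assms mult_left_le[of \<alpha> "x - \<beta>"] by (simp add: le_divide_eq)
  ultimately show ?thesis
    using assms by auto
qed

lemma powr_half_exp_le:
  fixes a b c x y :: real
  assumes "a > 0" "x > 0" "a * (x powr c * exp (- b * x)) \<le> y"
  shows "(x / 2) powr c * exp (- b * x) \<le> 2 powr (- c) * (y / a)"
proof -
  have "(x / 2) powr c = x powr c * 2 powr (- c)"
    by (simp add: powr_divide powr_minus_divide)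
  then have "(x / 2) powr c * exp (- b * x) = 2 powr (- c) * (x powr c * exp (- b * x))"
    by simp
  also have "\<dots> \<le> 2 powr (- c) * (y / a)"
    using assms by (intro mult_left_mono) (simp_all add: pos_le_divide_eq mult.commute)
  finally show ?thesis .
qed

locale affine_exp_tail = prob_space M for M :: "'s measure" +
  fixes A B Y :: "'s \<Rightarrow> real" and f :: "real \<Rightarrow> real" and a b c cY :: real
  assumes A_meas[measurable]: "A \<in> borel_measurable M"
    and B_meas[measurable]: "B \<in> borel_measurable M"
    and Y_meas[measurable]: "Y \<in> borel_measurable M"
    and A_range: "prob {\<omega> \<in> space M. 0 < A \<omega> \<and> A \<omega> \<le> 1} = 1"
    and a_pos: "a > 0" and b_pos: "b > 0" and c_lt: "c < -1"
    and B_tail: "(\<lambda>x. prob {\<omega> \<in> space M. B \<omega> > x}) \<sim>[at_top] (\<lambda>x. a * x powr c * exp (- b * x))"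
    and f_meas[measurable]: "f \<in> borel_measurable borel"
    and f_nonneg: "\<And>y. f y \<ge> 0"
    and f_lim: "\<And>y. ((\<lambda>x. prob {\<omega> \<in> space M. A \<omega> * y + B \<omega> > x}
                          / prob {\<omega> \<in> space M. B \<omega> > x}) \<longlongrightarrow> f y) at_top"
    and indep: "indep_set
        {(\<lambda>\<omega>. (A \<omega>, B \<omega>)) -` S \<inter> space M | S. S \<in> sets (borel \<Otimes>\<^sub>M borel)}
        {Y -` S \<inter> space M | S. S \<in> sets borel}"
    and cY_pos: "cY > 0"
    and Y_tail: "((\<lambda>x. prob {\<omega> \<in> space M. Y \<omega> > x}
                     / prob {\<omega> \<in> space M. B \<omega> > x}) \<longlongrightarrow> cY) at_top"
begin

definition F :: "real \<Rightarrow> real" where "F x = prob {\<omega>\<in>space M. B \<omega> > x}"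
definition G :: "real \<Rightarrow> real" where "G x = prob {\<omega>\<in>space M. Y \<omega> > x}"

lemma F_asymp_equiv: "F \<sim>[at_top] (\<lambda>x. a * (x powr c * exp (- b * x)))"
  using B_tail by (simp add: F_def[abs_def] mult.assoc)

lemma G_asymp_equiv: "G \<sim>[at_top] (\<lambda>x. cY * a * (x powr c * exp (- b * x)))"
proof -
  have "((\<lambda>x. G x / F x / cY) \<longlongrightarrow> cY / cY) at_top"
    using Y_tail[folded F_def G_def] by (rule tendsto_divide) (use cY_pos in simp_all)
  then have "G \<sim>[at_top] (\<lambda>x. F x * cY)"
    using cY_pos by (intro asymp_equivI') simp
  also have "(\<lambda>x. F x * cY) \<sim>[at_top] (\<lambda>x. a * (x powr c * exp (- b * x)) * cY)"
    by (intro asymp_equiv_mult asymp_equiv_refl F_asymp_equiv)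
  finally show ?thesis
    by (simp add: mult_ac)
qed

lemma F_eventually_pos: "eventually (\<lambda>x. F x > 0) at_top"
  using asymp_equiv_eventually_pos_iff[OF F_asymp_equiv] eventually_gt_at_top[of 0]
  by eventually_elim (use a_pos in simp)

lemma F_shift: "((\<lambda>x. F (x + s) / F x) \<longlongrightarrow> exp (- b * s)) at_top"
proof (rule tendsto_ratio_of_asymp_equiv[OF F_asymp_equiv F_asymp_equiv])
  show "filterlim (\<lambda>x. x + s) at_top at_top" by real_asymp
  have "(\<lambda>x. a * ((x + s) powr c * exp (- b * (x + s))) / (a * (x powr c * exp (- b * x))))
      = (\<lambda>x. (x + s) powr c * exp (- b * (x + s)) / (x powr c * exp (- b * x)))"
    using a_pos by (simp add: fun_eq_iff)
  with exp_tail_shift_ratio[of s c b]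
  show "((\<lambda>x. a * ((x + s) powr c * exp (- b * (x + s))) / (a * (x powr c * exp (- b * x))))
      \<longlongrightarrow> exp (- b * s)) at_top"
    by simp
qed

lemma G_shift: "((\<lambda>x. G (x + s) / F x) \<longlongrightarrow> cY * exp (- b * s)) at_top"
proof (rule tendsto_ratio_of_asymp_equiv[OF G_asymp_equiv F_asymp_equiv])
  show "filterlim (\<lambda>x. x + s) at_top at_top" by real_asymp
  have "(\<lambda>x. cY * a * ((x + s) powr c * exp (- b * (x + s))) / (a * (x powr c * exp (- b * x))))
      = (\<lambda>x. cY * ((x + s) powr c * exp (- b * (x + s)) / (x powr c * exp (- b * x))))"
    using a_pos by (simp add: fun_eq_iff)
  with tendsto_mult_left[OF exp_tail_shift_ratio[of s c b], of cY]
  show "((\<lambda>x. cY * a * ((x + s) powr c * exp (- b * (x + s))) / (a * (x powr c * exp (- b * x))))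
      \<longlongrightarrow> cY * exp (- b * s)) at_top"
    by simp
qed

lemma G_dilation:
  assumes "u > 1"
  shows "((\<lambda>x. G (u * x + s) / F x) \<longlongrightarrow> 0) at_top"
proof (rule tendsto_ratio_of_asymp_equiv[OF G_asymp_equiv F_asymp_equiv])
  show "filterlim (\<lambda>x. u * x + s) at_top at_top"
    using assms by real_asymp
  have "(\<lambda>x. cY * a * ((u * x + s) powr c * exp (- b * (u * x + s))) / (a * (x powr c * exp (- b * x))))
      = (\<lambda>x. cY * ((u * x + s) powr c * exp (- b * (u * x + s)) / (x powr c * exp (- b * x))))"
    using a_pos by (simp add: fun_eq_iff)
  with tendsto_mult_left[OF exp_tail_dilation_ratio[OF assms b_pos, of s c], of cY]
  show "((\<lambda>x. cY * a * ((u * x + s) powr c * exp (- b * (u * x + s))) / (a * (x powr c * exp (- b * x))))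
      \<longlongrightarrow> 0) at_top"
    by simp
qed

lemma tail_bounds:
  "eventually (\<lambda>t. F t \<le> 2 * (cY + 1) * a * (t powr c * exp (- b * t))
      \<and> G t \<le> 2 * (cY + 1) * a * (t powr c * exp (- b * t))
      \<and> a * (t powr c * exp (- b * t)) \<le> 2 * F t) at_top"
proof -
  have "eventually (\<lambda>t. norm (F t) \<le> 2 * norm (a * (t powr c * exp (- b * t)))) at_top"
    by (rule asymp_equiv_imp_eventually_le[OF F_asymp_equiv]) simp
  moreover have "eventually (\<lambda>t. norm (G t) \<le> 2 * norm (cY * a * (t powr c * exp (- b * t)))) at_top"
    by (rule asymp_equiv_imp_eventually_le[OF G_asymp_equiv]) simp
  moreover have "eventually (\<lambda>t. 1 / 2 * norm (a * (t powr c * exp (- b * t))) \<le> norm (F t)) at_top"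
    by (rule asymp_equiv_imp_eventually_ge[OF F_asymp_equiv]) simp
  ultimately show ?thesis
    using eventually_gt_at_top[of 0]
  proof eventually_elim
    case (elim t)
    define \<phi> where "\<phi> = t powr c * exp (- b * t)"
    have \<phi>: "\<phi> > 0"
      using elim(4) by (simp add: \<phi>_def)
    have F: "F t \<le> 2 * a * \<phi>" and G: "G t \<le> 2 * cY * a * \<phi>" and F': "a * \<phi> \<le> 2 * F t"
      using elim(1-3) \<phi> a_pos cY_pos unfolding \<phi>_def by (simp_all add: F_def G_def abs_mult mult_ac)
    have "2 * a * \<phi> \<le> 2 * (cY + 1) * a * \<phi>" "2 * cY * a * \<phi> \<le> 2 * (cY + 1) * a * \<phi>"
      using \<phi> a_pos cY_pos by (simp_all add: algebra_simps)
    with F G F' show ?case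
      unfolding \<phi>_def by (simp add: mult.assoc)
  qed
qed

lemma integrable_exp_B: "integrable M (\<lambda>\<omega>. exp (b * B \<omega>))"
  by (rule integrable_exp_of_tail_bound[OF B_meas b_pos c_lt, of "2 * (cY + 1) * a"])
    (use a_pos cY_pos in simp, use tail_bounds in \<open>eventually_elim, simp add: F_def mult.assoc\<close>)

lemma integrable_exp_Y: "integrable M (\<lambda>\<omega>. exp (b * Y \<omega>))"
  by (rule integrable_exp_of_tail_bound[OF Y_meas b_pos c_lt, of "2 * (cY + 1) * a"])
    (use a_pos cY_pos in simp, use tail_bounds in \<open>eventually_elim, simp add: G_def mult.assoc\<close>)

lemma AE_A_range: "AE \<omega> in M. 0 < A \<omega> \<and> A \<omega> \<le> 1"
proof -
  have "{\<omega> \<in> space M. 0 < A \<omega> \<and> A \<omega> \<le> 1} \<in> events"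
    by measurable
  from AE_in_set_eq_1[OF this] A_range
  have "AE \<omega> in M. \<omega> \<in> {\<omega> \<in> space M. 0 < A \<omega> \<and> A \<omega> \<le> 1}"
    by simp
  then show ?thesis
    by eventually_elim simp
qed

text \<open>\<open>indep_var\<close> compares random variables of one type, so \<open>Y\<close> is padded to \<open>(Y, 0)\<close>.\<close>

lemma indep_var_AB_Y:
  "indep_var (borel \<Otimes>\<^sub>M borel) (\<lambda>\<omega>. (A \<omega>, B \<omega>)) (borel \<Otimes>\<^sub>M borel) (\<lambda>\<omega>. (Y \<omega>, 0::real))"
  unfolding indep_var_def indep_vars_def2
proof (intro conjI ballI)
  fix i :: bool
  show "random_variable (case_bool (borel \<Otimes>\<^sub>M borel) (borel \<Otimes>\<^sub>M borel) i)
          (case_bool (\<lambda>\<omega>. (A \<omega>, B \<omega>)) (\<lambda>\<omega>. (Y \<omega>, 0::real)) i)"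
    by (cases i) simp_all
next
  show "indep_sets (\<lambda>i. {case_bool (\<lambda>\<omega>. (A \<omega>, B \<omega>)) (\<lambda>\<omega>. (Y \<omega>, 0::real)) i -` S \<inter> space M |S.
        S \<in> sets (case_bool (borel \<Otimes>\<^sub>M borel) (borel \<Otimes>\<^sub>M borel) i)}) UNIV"
  proof (rule indep_sets_mono_sets[OF indep[unfolded indep_set_def]])
    fix i :: bool
    have "\<exists>S'. (\<lambda>\<omega>. (Y \<omega>, 0::real)) -` S \<inter> space M = Y -` S' \<inter> space M \<and> S' \<in> sets borel"
      if "S \<in> sets (borel \<Otimes>\<^sub>M borel)" for S
    proof (intro exI conjI)
      have "(\<lambda>y::real. (y, 0::real)) \<in> measurable borel (borel \<Otimes>\<^sub>M borel)"
        by measurable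
      from measurable_sets[OF this that] show "(\<lambda>y::real. (y, 0::real)) -` S \<in> sets borel"
        by simp
    qed auto
    then show "{case_bool (\<lambda>\<omega>. (A \<omega>, B \<omega>)) (\<lambda>\<omega>. (Y \<omega>, 0::real)) i -` S \<inter> space M |S.
        S \<in> sets (case_bool (borel \<Otimes>\<^sub>M borel) (borel \<Otimes>\<^sub>M borel) i)}
      \<subseteq> case_bool {(\<lambda>\<omega>. (A \<omega>, B \<omega>)) -` S \<inter> space M | S. S \<in> sets (borel \<Otimes>\<^sub>M borel)}
        {Y -` S \<inter> space M | S. S \<in> sets borel} i"
      by (cases i) auto
  qed
qed

lemma prob_eq_expectation_given_AB:
  assumes "Measurable.pred ((borel \<Otimes>\<^sub>M borel) \<Otimes>\<^sub>M (borel \<Otimes>\<^sub>M borel))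
      (\<lambda>p::(real \<times> real) \<times> (real \<times> real). P (fst (fst p)) (snd (fst p)) (fst (snd p)))"
  shows "prob {\<omega>\<in>space M. P (A \<omega>) (B \<omega>) (Y \<omega>)}
           = expectation (\<lambda>\<omega>. prob {\<omega>'\<in>space M. P (A \<omega>) (B \<omega>) (Y \<omega>')})"
    and "(\<lambda>\<omega>. prob {\<omega>'\<in>space M. P (A \<omega>) (B \<omega>) (Y \<omega>')}) \<in> borel_measurable M"
  using prob_indep_eq_expectation[OF indep_var_AB_Y, where P="\<lambda>ab y. P (fst ab) (snd ab) (fst y)", OF assms]
  by simp_all

lemma prob_eq_expectation_given_Y:
  assumes "Measurable.pred ((borel \<Otimes>\<^sub>M borel) \<Otimes>\<^sub>M (borel \<Otimes>\<^sub>M borel))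
      (\<lambda>p::(real \<times> real) \<times> (real \<times> real). P (fst (fst p)) (snd (fst p)) (fst (snd p)))"
  shows "prob {\<omega>\<in>space M. P (A \<omega>) (B \<omega>) (Y \<omega>)}
           = expectation (\<lambda>\<omega>. prob {\<omega>'\<in>space M. P (A \<omega>') (B \<omega>') (Y \<omega>)})"
    and "(\<lambda>\<omega>. prob {\<omega>'\<in>space M. P (A \<omega>') (B \<omega>') (Y \<omega>)}) \<in> borel_measurable M"
proof -
  have "Measurable.pred ((borel \<Otimes>\<^sub>M borel) \<Otimes>\<^sub>M (borel \<Otimes>\<^sub>M borel))
      (\<lambda>p::(real \<times> real) \<times> (real \<times> real). P (fst (snd p)) (snd (snd p)) (fst (fst p)))"
    using measurable_compose[OF measurable_pair_swap' assms] by (simp add: split_beta')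
  from prob_indep_eq_expectation[OF indep_var_commute[OF indep_var_AB_Y],
      where P="\<lambda>y ab. P (fst ab) (snd ab) (fst y)", OF this]
  show "prob {\<omega>\<in>space M. P (A \<omega>) (B \<omega>) (Y \<omega>)}
           = expectation (\<lambda>\<omega>. prob {\<omega>'\<in>space M. P (A \<omega>') (B \<omega>') (Y \<omega>)})"
    and "(\<lambda>\<omega>. prob {\<omega>'\<in>space M. P (A \<omega>') (B \<omega>') (Y \<omega>)}) \<in> borel_measurable M"
    by simp_all
qed

lemma mult_le_max_0:
  fixes \<alpha> y :: real
  assumes "0 < \<alpha>" "\<alpha> \<le> 1"
  shows "\<alpha> * y \<le> max y 0"
  using assms by (cases "y \<ge> 0") (auto simp: mult_left_le_one_le mult_pos_neg max_def less_imp_le)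

lemma prob_affine_le_F:
  assumes "max y 0 \<le> m"
  shows "prob {\<omega>\<in>space M. A \<omega> * y + B \<omega> > x} \<le> F (x - m)"
  unfolding F_def
proof (rule finite_measure_mono_AE)
  show "AE \<omega> in M. \<omega> \<in> {\<omega>\<in>space M. A \<omega> * y + B \<omega> > x} \<longrightarrow> \<omega> \<in> {\<omega>\<in>space M. B \<omega> > x - m}"
    using AE_A_range
  proof eventually_elim
    case (elim \<omega>)
    then have "A \<omega> * y \<le> m"
      using mult_le_max_0[of "A \<omega>" y] assms by linarith
    then show ?case by auto
  qed
qed measurable

lemma f_le_exp: "f y \<le> exp (b * max y 0)"
proof -
  have "eventually (\<lambda>x. prob {\<omega>\<in>space M. A \<omega> * y + B \<omega> > x} / F x \<le> F (x + - max y 0) / F x) at_top"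
    using F_eventually_pos
    by eventually_elim (intro divide_right_mono, use prob_affine_le_F[of y "max y 0"] in simp_all)
  from tendsto_le[OF _ F_shift f_lim[folded F_def] this] show ?thesis
    by simp
qed

lemma integrable_f_Y: "integrable M (\<lambda>\<omega>. f (Y \<omega>))"
proof (rule Bochner_Integration.integrable_bound[OF Bochner_Integration.integrable_add[OF integrable_exp_Y integrable_const]])
  show "(\<lambda>\<omega>. f (Y \<omega>)) \<in> borel_measurable M"
    by measurable
  have "f y \<le> exp (b * y) + 1" for y
  proof -
    have "f y \<le> exp (b * max y 0)"
      by (rule f_le_exp)
    also have "\<dots> \<le> exp (b * y) + 1"
      by (cases "y \<ge> 0") (simp_all add: max_def)
    finally show ?thesis .
  qed
  then show "AE \<omega> in M. norm (f (Y \<omega>)) \<le> norm (exp (b * Y \<omega>) + 1)"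
    using f_nonneg by (intro AE_I2) (simp add: add_nonneg_nonneg)
qed

lemma prob_affine_ratio_bounded:
  assumes "K \<ge> 0"
  shows "eventually (\<lambda>x. \<forall>y\<le>K. prob {\<omega>\<in>space M. A \<omega> * y + B \<omega> > x} / F x \<le> exp (b * K) + 1) at_top"
proof -
  have "eventually (\<lambda>x. F (x + - K) / F x < exp (b * K) + 1) at_top"
    using F_shift by (rule order_tendstoD) simp
  then show ?thesis
    using F_eventually_pos
  proof eventually_elim
    case (elim x)
    have "prob {\<omega>\<in>space M. A \<omega> * y + B \<omega> > x} / F x \<le> F (x + - K) / F x" if "y \<le> K" for y
      using prob_affine_le_F[of y K x] that assms elim(2) by (intro divide_right_mono) auto
    with elim(1) show ?case
      by (meson less_imp_le order_trans)
  qed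
qed

lemma tendsto_Y_le:
  assumes "K \<ge> 0"
  shows "((\<lambda>x. prob {\<omega>\<in>space M. A \<omega> * Y \<omega> + B \<omega> > x \<and> Y \<omega> \<le> K} / F x)
          \<longlongrightarrow> expectation (\<lambda>\<omega>. f (Y \<omega>) * indicator {\<omega>\<in>space M. Y \<omega> \<le> K} \<omega>)) at_top"
proof -
  define s where "s x \<omega> = prob {\<omega>'\<in>space M. A \<omega>' * Y \<omega> + B \<omega>' > x \<and> Y \<omega> \<le> K} / F x" for x \<omega>
  have P: "Measurable.pred ((borel \<Otimes>\<^sub>M borel) \<Otimes>\<^sub>M (borel \<Otimes>\<^sub>M borel))
      (\<lambda>p::(real \<times> real) \<times> (real \<times> real). fst (fst p) * fst (snd p) + snd (fst p) > x \<and> fst (snd p) \<le> K)" for x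
    by measurable
  have "prob {\<omega>\<in>space M. A \<omega> * Y \<omega> + B \<omega> > x \<and> Y \<omega> \<le> K} / F x = expectation (s x)" for x
    unfolding s_def integral_divide_zero by (simp add: prob_eq_expectation_given_Y(1)[OF P])
  moreover have "((\<lambda>x. expectation (s x)) \<longlongrightarrow> expectation (\<lambda>\<omega>. f (Y \<omega>) * indicator {\<omega>\<in>space M. Y \<omega> \<le> K} \<omega>)) at_top"
  proof (rule integral_dominated_convergence_at_top[where w="\<lambda>_. exp (b * K) + 1"])
    show "(\<lambda>\<omega>. f (Y \<omega>) * indicator {\<omega>\<in>space M. Y \<omega> \<le> K} \<omega>) \<in> borel_measurable M"
      by measurable
    show "s x \<in> borel_measurable M" for x
      unfolding s_def using prob_eq_expectation_given_Y(2)[OF P] by measurable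
    show "integrable M (\<lambda>_. exp (b * K) + 1)"
      by simp
    show "AE \<omega> in M. ((\<lambda>x. s x \<omega>) \<longlongrightarrow> f (Y \<omega>) * indicator {\<omega>\<in>space M. Y \<omega> \<le> K} \<omega>) at_top"
    proof (rule AE_I2)
      fix \<omega> assume "\<omega> \<in> space M"
      then show "((\<lambda>x. s x \<omega>) \<longlongrightarrow> f (Y \<omega>) * indicator {\<omega>\<in>space M. Y \<omega> \<le> K} \<omega>) at_top"
        using f_lim[of "Y \<omega>", folded F_def] by (cases "Y \<omega> \<le> K") (simp_all add: s_def)
    qed
    show "eventually (\<lambda>x. AE \<omega> in M. norm (s x \<omega>) \<le> exp (b * K) + 1) at_top"
      using prob_affine_ratio_bounded[OF assms] F_eventually_pos
    proof eventually_elim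
      case (elim x)
      show ?case
      proof (rule AE_I2)
        fix \<omega> assume "\<omega> \<in> space M"
        have "s x \<omega> \<ge> 0"
          using elim(2) by (simp add: s_def)
        moreover have "s x \<omega> \<le> exp (b * K) + 1"
          using elim(1) by (cases "Y \<omega> \<le> K") (simp_all add: s_def)
        ultimately show "norm (s x \<omega>) \<le> exp (b * K) + 1"
          by simp
      qed
    qed
  qed
  ultimately show ?thesis
    by simp
qed

lemma G_affine_ratio:
  assumes "0 < \<alpha>" "\<alpha> \<le> 1"
  shows "((\<lambda>x. G ((x - \<beta>) / \<alpha>) / F x) \<longlongrightarrow> (if \<alpha> = 1 then cY * exp (b * \<beta>) else 0)) at_top"
proof (cases "\<alpha> = 1")
  case True
  then show ?thesis
    using G_shift[of "- \<beta>"] by simp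
next
  case False
  then have "1 / \<alpha> > 1"
    using assms by (simp add: less_divide_eq)
  from G_dilation[OF this, of "- \<beta> / \<alpha>"] False show ?thesis
    by (simp add: diff_divide_distrib)
qed

lemma tendsto_prob_Y_affine_ratio:
  assumes "0 < \<alpha>" "\<alpha> \<le> 1" "K \<ge> 0"
  shows "((\<lambda>x. prob {\<omega>\<in>space M. \<alpha> * Y \<omega> + \<beta> > x \<and> Y \<omega> > K \<and> \<beta> \<le> K} / F x)
          \<longlongrightarrow> (if \<alpha> = 1 \<and> \<beta> \<le> K then cY * exp (b * \<beta>) else 0)) at_top"
proof (cases "\<beta> \<le> K")
  case True
  have "eventually (\<lambda>x. G ((x - \<beta>) / \<alpha>) / F x
      = prob {\<omega>\<in>space M. \<alpha> * Y \<omega> + \<beta> > x \<and> Y \<omega> > K \<and> \<beta> \<le> K} / F x) at_top"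
    using eventually_ge_at_top[of "2 * K"]
    by eventually_elim (use assms True in \<open>simp add: G_def affine_gt_iff\<close>)
  with G_affine_ratio[OF assms(1,2), of \<beta>] True show ?thesis
    by (simp add: Lim_transform_eventually)
next
  case False
  then show ?thesis
    by simp
qed

lemma prob_Y_affine_ratio_bounded:
  assumes "K \<ge> 0"
  shows "eventually (\<lambda>x. \<forall>\<alpha> \<beta>. 0 < \<alpha> \<and> \<alpha> \<le> 1 \<longrightarrow>
      prob {\<omega>\<in>space M. \<alpha> * Y \<omega> + \<beta> > x \<and> Y \<omega> > K \<and> \<beta> \<le> K} / F x \<le> cY * exp (b * K) + 1) at_top"
proof -
  have "eventually (\<lambda>x. G (x + - K) / F x < cY * exp (b * K) + 1) at_top"
    using G_shift by (rule order_tendstoD) simp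
  then show ?thesis
    using F_eventually_pos
  proof eventually_elim
    case (elim x)
    have "prob {\<omega>\<in>space M. \<alpha> * Y \<omega> + \<beta> > x \<and> Y \<omega> > K \<and> \<beta> \<le> K} / F x \<le> G (x + - K) / F x"
      if "0 < \<alpha>" "\<alpha> \<le> 1" for \<alpha> \<beta>
    proof (intro divide_right_mono)
      have "\<alpha> * y \<le> y" if "y > K" for y
        using \<open>0 < \<alpha>\<close> \<open>\<alpha> \<le> 1\<close> assms that by (intro mult_left_le_one_le) auto
      then have "{\<omega>\<in>space M. \<alpha> * Y \<omega> + \<beta> > x \<and> Y \<omega> > K \<and> \<beta> \<le> K} \<subseteq> {\<omega>\<in>space M. Y \<omega> > x + - K}"
        by (smt (verit) Collect_mono_iff)
      then show "prob {\<omega>\<in>space M. \<alpha> * Y \<omega> + \<beta> > x \<and> Y \<omega> > K \<and> \<beta> \<le> K} \<le> G (x + - K)"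
        unfolding G_def by (rule finite_measure_mono) measurable
    qed (use elim(2) in simp)
    with elim(1) show ?case
      by (meson less_imp_le order_trans)
  qed
qed

lemma tendsto_Y_gt_B_le:
  assumes "K \<ge> 0"
  shows "((\<lambda>x. prob {\<omega>\<in>space M. A \<omega> * Y \<omega> + B \<omega> > x \<and> Y \<omega> > K \<and> B \<omega> \<le> K} / F x)
          \<longlongrightarrow> cY * expectation (\<lambda>\<omega>. exp (b * B \<omega>) * indicator {\<omega>. A \<omega> = 1} \<omega>
                                   * indicator {\<omega>\<in>space M. B \<omega> \<le> K} \<omega>)) at_top"
proof -
  define s where "s x \<omega> = prob {\<omega>'\<in>space M. A \<omega> * Y \<omega>' + B \<omega> > x \<and> Y \<omega>' > K \<and> B \<omega> \<le> K} / F x" for x \<omega>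
  define l where "l \<omega> = cY * (exp (b * B \<omega>) * indicator {\<omega>. A \<omega> = 1} \<omega> * indicator {\<omega>\<in>space M. B \<omega> \<le> K} \<omega>)" for \<omega>
  have P: "Measurable.pred ((borel \<Otimes>\<^sub>M borel) \<Otimes>\<^sub>M (borel \<Otimes>\<^sub>M borel))
      (\<lambda>p::(real \<times> real) \<times> (real \<times> real). fst (fst p) * fst (snd p) + snd (fst p) > x \<and> fst (snd p) > K \<and> snd (fst p) \<le> K)" for x
    by measurable
  have "prob {\<omega>\<in>space M. A \<omega> * Y \<omega> + B \<omega> > x \<and> Y \<omega> > K \<and> B \<omega> \<le> K} / F x = expectation (s x)" for x
    unfolding s_def integral_divide_zero by (simp add: prob_eq_expectation_given_AB(1)[OF P])
  moreover have "((\<lambda>x. expectation (s x)) \<longlongrightarrow> expectation l) at_top"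
  proof (rule integral_dominated_convergence_at_top[where w="\<lambda>_. cY * exp (b * K) + 1"])
    show "l \<in> borel_measurable M"
      unfolding l_def by measurable
    show "s x \<in> borel_measurable M" for x
      unfolding s_def using prob_eq_expectation_given_AB(2)[OF P] by measurable
    show "integrable M (\<lambda>_. cY * exp (b * K) + 1)"
      by simp
    show "AE \<omega> in M. ((\<lambda>x. s x \<omega>) \<longlongrightarrow> l \<omega>) at_top"
      using AE_A_range AE_space
    proof eventually_elim
      case (elim \<omega>)
      then have "l \<omega> = (if A \<omega> = 1 \<and> B \<omega> \<le> K then cY * exp (b * B \<omega>) else 0)"
        by (simp add: l_def indicator_def)
      with tendsto_prob_Y_affine_ratio[of "A \<omega>" K "B \<omega>"] elim assms show ?case
        by (simp add: s_def)
    qed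
    show "eventually (\<lambda>x. AE \<omega> in M. norm (s x \<omega>) \<le> cY * exp (b * K) + 1) at_top"
      using prob_Y_affine_ratio_bounded[OF assms] F_eventually_pos
    proof eventually_elim
      case (elim x)
      note bound = elim(1) and F_pos = elim(2)
      show ?case
        using AE_A_range
      proof eventually_elim
        case (elim \<omega>)
        have "0 \<le> s x \<omega>" "s x \<omega> \<le> cY * exp (b * K) + 1"
          using bound[rule_format, of "A \<omega>" "B \<omega>"] F_pos elim by (simp_all add: s_def)
        then show ?case
          by simp
      qed
    qed
  qed
  ultimately show ?thesis
    by (simp add: l_def[abs_def])
qed

definition tail_exp_moment :: "('s \<Rightarrow> real) \<Rightarrow> real \<Rightarrow> real" where
  "tail_exp_moment Z K = expectation (\<lambda>\<omega>. exp (b * Z \<omega>) * indicator {\<omega>\<in>space M. Z \<omega> > K} \<omega>)"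

lemma tail_exp_moment_nonneg: "tail_exp_moment Z K \<ge> 0"
  unfolding tail_exp_moment_def by (intro integral_nonneg_AE) auto

lemma integrable_exp_indicator:
  assumes "integrable M (\<lambda>\<omega>. exp (b * Z \<omega>))" "Z \<in> borel_measurable M"
  shows "integrable M (\<lambda>\<omega>. exp (b * Z \<omega>) * indicator {\<omega>\<in>space M. Z \<omega> > K} \<omega>)"
  using integrable_mult_indicator[of "{\<omega>\<in>space M. Z \<omega> > K}" M "\<lambda>\<omega>. exp (b * Z \<omega>)"] assms
  by (simp add: mult.commute)

lemma prob_both_large_le:
  assumes "K \<ge> 0"
  shows "prob {\<omega>\<in>space M. A \<omega> * Y \<omega> + B \<omega> > x \<and> Y \<omega> > K \<and> B \<omega> > K}
    \<le> prob {\<omega>\<in>space M. Y \<omega> + B \<omega> > x \<and> K < Y \<omega> \<and> Y \<omega> \<le> x / 2}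
      + prob {\<omega>\<in>space M. Y \<omega> > max (x - B \<omega>) (x / 2) \<and> B \<omega> > K}"
proof -
  have "prob {\<omega>\<in>space M. A \<omega> * Y \<omega> + B \<omega> > x \<and> Y \<omega> > K \<and> B \<omega> > K}
      \<le> prob ({\<omega>\<in>space M. Y \<omega> + B \<omega> > x \<and> K < Y \<omega> \<and> Y \<omega> \<le> x / 2}
            \<union> {\<omega>\<in>space M. Y \<omega> > max (x - B \<omega>) (x / 2) \<and> B \<omega> > K})"
  proof (rule finite_measure_mono_AE)
    show "AE \<omega> in M. \<omega> \<in> {\<omega>\<in>space M. A \<omega> * Y \<omega> + B \<omega> > x \<and> Y \<omega> > K \<and> B \<omega> > K} \<longrightarrow>
        \<omega> \<in> {\<omega>\<in>space M. Y \<omega> + B \<omega> > x \<and> K < Y \<omega> \<and> Y \<omega> \<le> x / 2}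
            \<union> {\<omega>\<in>space M. Y \<omega> > max (x - B \<omega>) (x / 2) \<and> B \<omega> > K}"
      using AE_A_range
    proof eventually_elim
      case (elim \<omega>)
      have "A \<omega> * Y \<omega> \<le> Y \<omega>" if "Y \<omega> > K"
        using elim assms that by (intro mult_left_le_one_le) auto
      then show ?case
        by auto
    qed
  qed measurable
  also have "\<dots> \<le> prob {\<omega>\<in>space M. Y \<omega> + B \<omega> > x \<and> K < Y \<omega> \<and> Y \<omega> \<le> x / 2}
      + prob {\<omega>\<in>space M. Y \<omega> > max (x - B \<omega>) (x / 2) \<and> B \<omega> > K}"
    by (rule measure_Un_le) measurable
  finally show ?thesis .
qed

lemma prob_moderate_Y_le:
  assumes F_bound: "\<And>t. t \<ge> t0 \<Longrightarrow> F t \<le> C * (t powr c * exp (- b * t))"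
    and "t0 > 0" "C \<ge> 0" "x \<ge> 2 * t0"
  shows "prob {\<omega>\<in>space M. Y \<omega> + B \<omega> > x \<and> K < Y \<omega> \<and> Y \<omega> \<le> x / 2}
    \<le> C * ((x / 2) powr c * exp (- b * x)) * tail_exp_moment Y K"
proof -
  define E where "E = C * ((x / 2) powr c * exp (- b * x))"
  have P: "Measurable.pred ((borel \<Otimes>\<^sub>M borel) \<Otimes>\<^sub>M (borel \<Otimes>\<^sub>M borel))
      (\<lambda>p::(real \<times> real) \<times> (real \<times> real). fst (snd p) + snd (fst p) > x \<and> K < fst (snd p) \<and> fst (snd p) \<le> x / 2)"
    by measurable
  have "prob {\<omega>\<in>space M. Y \<omega> + B \<omega> > x \<and> K < Y \<omega> \<and> Y \<omega> \<le> x / 2}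
      = expectation (\<lambda>\<omega>. prob {\<omega>'\<in>space M. Y \<omega> + B \<omega>' > x \<and> K < Y \<omega> \<and> Y \<omega> \<le> x / 2})"
    using prob_eq_expectation_given_Y(1)[OF P] by simp
  also have "\<dots> \<le> expectation (\<lambda>\<omega>. E * (exp (b * Y \<omega>) * indicator {\<omega>\<in>space M. Y \<omega> > K} \<omega>))"
  proof (rule integral_mono)
    show "integrable M (\<lambda>\<omega>. prob {\<omega>'\<in>space M. Y \<omega> + B \<omega>' > x \<and> K < Y \<omega> \<and> Y \<omega> \<le> x / 2})"
      using prob_eq_expectation_given_Y(2)[OF P] by (intro integrable_const_bound[where B=1]) auto
    show "integrable M (\<lambda>\<omega>. E * (exp (b * Y \<omega>) * indicator {\<omega>\<in>space M. Y \<omega> > K} \<omega>))"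
      using integrable_exp_indicator[OF integrable_exp_Y Y_meas] by simp
    fix \<omega> assume "\<omega> \<in> space M"
    show "prob {\<omega>'\<in>space M. Y \<omega> + B \<omega>' > x \<and> K < Y \<omega> \<and> Y \<omega> \<le> x / 2}
        \<le> E * (exp (b * Y \<omega>) * indicator {\<omega>\<in>space M. Y \<omega> > K} \<omega>)"
    proof (cases "K < Y \<omega> \<and> Y \<omega> \<le> x / 2")
      case True
      then have "prob {\<omega>'\<in>space M. Y \<omega> + B \<omega>' > x \<and> K < Y \<omega> \<and> Y \<omega> \<le> x / 2} = F (x - Y \<omega>)"
        unfolding F_def using True by (intro arg_cong[where f=prob] Collect_cong) auto
      also have "\<dots> \<le> E * exp (b * Y \<omega>)"
        unfolding E_def using True assms c_lt b_pos
        by (intro exp_tail_bound_shifted[where T=F, OF F_bound]) auto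
      finally show ?thesis
        using True \<open>\<omega> \<in> space M\<close> by simp
    next
      case False
      then have "{\<omega>'\<in>space M. Y \<omega> + B \<omega>' > x \<and> K < Y \<omega> \<and> Y \<omega> \<le> x / 2} = {}"
        by blast
      then have "prob {\<omega>'\<in>space M. Y \<omega> + B \<omega>' > x \<and> K < Y \<omega> \<and> Y \<omega> \<le> x / 2} = 0"
        by (simp only: measure_empty)
      then show ?thesis
        using \<open>C \<ge> 0\<close> by (simp add: E_def)
    qed
  qed
  also have "\<dots> = E * tail_exp_moment Y K"
    by (simp add: tail_exp_moment_def)
  finally show ?thesis
    by (simp add: E_def)
qed

lemma prob_large_Y_le:
  assumes G_bound: "\<And>t. t \<ge> t0 \<Longrightarrow> G t \<le> C * (t powr c * exp (- b * t))"
    and "t0 > 0" "C \<ge> 0" "x \<ge> 2 * t0"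
  shows "prob {\<omega>\<in>space M. Y \<omega> > max (x - B \<omega>) (x / 2) \<and> B \<omega> > K}
    \<le> C * ((x / 2) powr c * exp (- b * x)) * tail_exp_moment B K"
proof -
  define E where "E = C * ((x / 2) powr c * exp (- b * x))"
  have P: "Measurable.pred ((borel \<Otimes>\<^sub>M borel) \<Otimes>\<^sub>M (borel \<Otimes>\<^sub>M borel))
      (\<lambda>p::(real \<times> real) \<times> (real \<times> real). fst (snd p) > max (x - snd (fst p)) (x / 2) \<and> snd (fst p) > K)"
    by measurable
  have "prob {\<omega>\<in>space M. Y \<omega> > max (x - B \<omega>) (x / 2) \<and> B \<omega> > K}
      = expectation (\<lambda>\<omega>. prob {\<omega>'\<in>space M. Y \<omega>' > max (x - B \<omega>) (x / 2) \<and> B \<omega> > K})"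
    using prob_eq_expectation_given_AB(1)[OF P] by simp
  also have "\<dots> \<le> expectation (\<lambda>\<omega>. E * (exp (b * B \<omega>) * indicator {\<omega>\<in>space M. B \<omega> > K} \<omega>))"
  proof (rule integral_mono)
    show "integrable M (\<lambda>\<omega>. prob {\<omega>'\<in>space M. Y \<omega>' > max (x - B \<omega>) (x / 2) \<and> B \<omega> > K})"
      using prob_eq_expectation_given_AB(2)[OF P] by (intro integrable_const_bound[where B=1]) auto
    show "integrable M (\<lambda>\<omega>. E * (exp (b * B \<omega>) * indicator {\<omega>\<in>space M. B \<omega> > K} \<omega>))"
      using integrable_exp_indicator[OF integrable_exp_B B_meas] by simp
    fix \<omega> assume "\<omega> \<in> space M"
    show "prob {\<omega>'\<in>space M. Y \<omega>' > max (x - B \<omega>) (x / 2) \<and> B \<omega> > K}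
        \<le> E * (exp (b * B \<omega>) * indicator {\<omega>\<in>space M. B \<omega> > K} \<omega>)"
    proof (cases "B \<omega> > K")
      case True
      then have "prob {\<omega>'\<in>space M. Y \<omega>' > max (x - B \<omega>) (x / 2) \<and> B \<omega> > K} = G (max (x - B \<omega>) (x / 2))"
        unfolding G_def by (intro arg_cong[where f=prob] Collect_cong) auto
      also have "\<dots> \<le> E * exp (b * B \<omega>)"
        unfolding E_def using assms c_lt b_pos
        by (intro exp_tail_bound_shifted[where T=G, OF G_bound]) auto
      finally show ?thesis
        using True \<open>\<omega> \<in> space M\<close> by simp
    next
      case False
      then have "{\<omega>'\<in>space M. Y \<omega>' > max (x - B \<omega>) (x / 2) \<and> B \<omega> > K} = {}"
        by blast
      then have "prob {\<omega>'\<in>space M. Y \<omega>' > max (x - B \<omega>) (x / 2) \<and> B \<omega> > K} = 0"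
        by (simp only: measure_empty)
      then show ?thesis
        using \<open>C \<ge> 0\<close> by (simp add: E_def)
    qed
  qed
  also have "\<dots> = E * tail_exp_moment B K"
    by (simp add: tail_exp_moment_def)
  finally show ?thesis
    by (simp add: E_def)
qed

lemma both_large_bound:
  obtains D where "\<And>K. K \<ge> 0 \<Longrightarrow> eventually (\<lambda>x.
      prob {\<omega>\<in>space M. A \<omega> * Y \<omega> + B \<omega> > x \<and> Y \<omega> > K \<and> B \<omega> > K} / F x
        \<le> D * (tail_exp_moment Y K + tail_exp_moment B K)) at_top"
proof -
  define C where "C = 2 * (cY + 1) * a"
  have C: "C \<ge> 0"
    using a_pos cY_pos by (simp add: C_def)
  from tail_bounds[folded C_def, unfolded eventually_at_top_linorder]
  obtain N where N: "\<forall>t\<ge>N. F t \<le> C * (t powr c * exp (- b * t))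
      \<and> G t \<le> C * (t powr c * exp (- b * t)) \<and> a * (t powr c * exp (- b * t)) \<le> 2 * F t"
    by blast
  define t0 where "t0 = max N 1"
  have t0: "t0 > 0" "\<And>t. t \<ge> t0 \<Longrightarrow> t \<ge> N"
    by (auto simp: t0_def)
  have F_bound: "F t \<le> C * (t powr c * exp (- b * t))"
    and G_bound: "G t \<le> C * (t powr c * exp (- b * t))"
    and F_lower: "a * (t powr c * exp (- b * t)) \<le> 2 * F t" if "t \<ge> t0" for t
    using N[rule_format, OF t0(2)[OF that]] by simp_all
  define D where "D = 2 * C * 2 powr (- c) / a"
  show thesis
  proof (rule that)
    fix K :: real assume "K \<ge> 0"
    show "eventually (\<lambda>x. prob {\<omega>\<in>space M. A \<omega> * Y \<omega> + B \<omega> > x \<and> Y \<omega> > K \<and> B \<omega> > K} / F x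
        \<le> D * (tail_exp_moment Y K + tail_exp_moment B K)) at_top"
      using eventually_ge_at_top[of "2 * t0"] F_eventually_pos
    proof eventually_elim
      case (elim x)
      define J where "J = tail_exp_moment Y K + tail_exp_moment B K"
      have J: "J \<ge> 0"
        by (simp add: J_def add_nonneg_nonneg tail_exp_moment_nonneg)
      have "x \<ge> t0" "x > 0"
        using elim t0 by auto
      have E: "(x / 2) powr c * exp (- b * x) \<le> 2 powr (- c) * (2 * F x / a)"
        using a_pos \<open>x > 0\<close> F_lower[OF \<open>x \<ge> t0\<close>] by (rule powr_half_exp_le)
      have "prob {\<omega>\<in>space M. A \<omega> * Y \<omega> + B \<omega> > x \<and> Y \<omega> > K \<and> B \<omega> > K}
          \<le> prob {\<omega>\<in>space M. Y \<omega> + B \<omega> > x \<and> K < Y \<omega> \<and> Y \<omega> \<le> x / 2}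
            + prob {\<omega>\<in>space M. Y \<omega> > max (x - B \<omega>) (x / 2) \<and> B \<omega> > K}"
        by (rule prob_both_large_le[OF \<open>K \<ge> 0\<close>])
      also have "\<dots> \<le> C * ((x / 2) powr c * exp (- b * x)) * tail_exp_moment Y K
          + C * ((x / 2) powr c * exp (- b * x)) * tail_exp_moment B K"
        by (intro add_mono prob_moderate_Y_le[OF F_bound t0(1) C elim(1)]
            prob_large_Y_le[OF G_bound t0(1) C elim(1)])
      also have "\<dots> = C * ((x / 2) powr c * exp (- b * x)) * J"
        by (simp add: J_def distrib_left)
      also have "\<dots> \<le> C * (2 powr (- c) * (2 * F x / a)) * J"
        using C J E by (intro mult_right_mono mult_left_mono) auto
      also have "\<dots> = D * J * F x"
        by (simp add: D_def mult_ac)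
      finally show ?case
        using elim(2) by (simp add: J_def pos_divide_le_eq)
    qed
  qed
qed

lemma prob_affine_split:
  "prob {\<omega>\<in>space M. A \<omega> * Y \<omega> + B \<omega> > x}
    = prob {\<omega>\<in>space M. A \<omega> * Y \<omega> + B \<omega> > x \<and> Y \<omega> \<le> K}
      + prob {\<omega>\<in>space M. A \<omega> * Y \<omega> + B \<omega> > x \<and> Y \<omega> > K \<and> B \<omega> \<le> K}
      + prob {\<omega>\<in>space M. A \<omega> * Y \<omega> + B \<omega> > x \<and> Y \<omega> > K \<and> B \<omega> > K}"
proof -
  define S1 where "S1 = {\<omega>\<in>space M. A \<omega> * Y \<omega> + B \<omega> > x \<and> Y \<omega> \<le> K}"
  define S2 where "S2 = {\<omega>\<in>space M. A \<omega> * Y \<omega> + B \<omega> > x \<and> Y \<omega> > K \<and> B \<omega> \<le> K}"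
  define S3 where "S3 = {\<omega>\<in>space M. A \<omega> * Y \<omega> + B \<omega> > x \<and> Y \<omega> > K \<and> B \<omega> > K}"
  have S: "S1 \<in> events" "S2 \<in> events" "S3 \<in> events"
    unfolding S1_def S2_def S3_def by measurable
  have "{\<omega>\<in>space M. A \<omega> * Y \<omega> + B \<omega> > x} = S1 \<union> (S2 \<union> S3)"
    unfolding S1_def S2_def S3_def by auto
  moreover have "prob (S2 \<union> S3) = prob S2 + prob S3"
    by (rule finite_measure_Union) (use S in \<open>auto simp: S2_def S3_def\<close>)
  moreover have "prob (S1 \<union> (S2 \<union> S3)) = prob S1 + prob (S2 \<union> S3)"
    by (rule finite_measure_Union) (use S in \<open>auto simp: S1_def S2_def S3_def\<close>)
  ultimately show ?thesis
    unfolding S1_def[symmetric] S2_def[symmetric] S3_def[symmetric] by simp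
qed

lemma tendsto_affine_tail_ratio:
  "((\<lambda>x. prob {\<omega>\<in>space M. A \<omega> * Y \<omega> + B \<omega> > x} / F x)
     \<longlongrightarrow> cY * expectation (\<lambda>\<omega>. exp (b * B \<omega>) * indicator {\<omega>. A \<omega> = 1} \<omega>)
         + expectation (\<lambda>\<omega>. f (Y \<omega>))) at_top"
proof -
  obtain D where D: "\<And>K. K \<ge> 0 \<Longrightarrow> eventually (\<lambda>x.
      prob {\<omega>\<in>space M. A \<omega> * Y \<omega> + B \<omega> > x \<and> Y \<omega> > K \<and> B \<omega> > K} / F x
        \<le> D * (tail_exp_moment Y K + tail_exp_moment B K)) at_top"
    using both_large_bound by blast
  define u where "u K x = prob {\<omega>\<in>space M. A \<omega> * Y \<omega> + B \<omega> > x \<and> Y \<omega> \<le> K} / F x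
      + prob {\<omega>\<in>space M. A \<omega> * Y \<omega> + B \<omega> > x \<and> Y \<omega> > K \<and> B \<omega> \<le> K} / F x" for K x
  define l where "l K = expectation (\<lambda>\<omega>. f (Y \<omega>) * indicator {\<omega>\<in>space M. Y \<omega> \<le> K} \<omega>)
      + cY * expectation (\<lambda>\<omega>. exp (b * B \<omega>) * indicator {\<omega>. A \<omega> = 1} \<omega> * indicator {\<omega>\<in>space M. B \<omega> \<le> K} \<omega>)" for K
  have integrable_A1: "integrable M (\<lambda>\<omega>. exp (b * B \<omega>) * indicator {\<omega>. A \<omega> = 1} \<omega>)"
  proof (rule Bochner_Integration.integrable_bound[OF integrable_exp_B])
    show "(\<lambda>\<omega>. exp (b * B \<omega>) * indicator {\<omega>. A \<omega> = 1} \<omega>) \<in> borel_measurable M"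
      by measurable
    show "AE \<omega> in M. norm (exp (b * B \<omega>) * indicator {\<omega>. A \<omega> = 1} \<omega>) \<le> norm (exp (b * B \<omega>))"
      by (intro AE_I2) (simp add: indicator_def)
  qed
  have l_lim: "(l \<longlongrightarrow> cY * expectation (\<lambda>\<omega>. exp (b * B \<omega>) * indicator {\<omega>. A \<omega> = 1} \<omega>)
      + expectation (\<lambda>\<omega>. f (Y \<omega>))) at_top"
    unfolding l_def[abs_def]
    using tendsto_add[OF tendsto_mult_left[OF tendsto_expectation_truncated[OF integrable_A1 B_meas], of cY]
        tendsto_expectation_truncated[OF integrable_f_Y Y_meas]]
    by (simp add: add.commute)
  have r_lim: "((\<lambda>K. D * (tail_exp_moment Y K + tail_exp_moment B K)) \<longlongrightarrow> 0) at_top"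
    unfolding tail_exp_moment_def
    using tendsto_mult_left[OF tendsto_add[OF tendsto_expectation_tail_truncated[OF integrable_exp_Y Y_meas]
        tendsto_expectation_tail_truncated[OF integrable_exp_B B_meas]], of D]
    by simp
  have u_lim: "(u K \<longlongrightarrow> l K) at_top" if "K \<ge> 0" for K
    unfolding u_def l_def by (rule tendsto_add[OF tendsto_Y_le[OF that] tendsto_Y_gt_B_le[OF that]])
  have u_approx: "eventually (\<lambda>x. \<bar>prob {\<omega>\<in>space M. A \<omega> * Y \<omega> + B \<omega> > x} / F x - u K x\<bar>
      \<le> D * (tail_exp_moment Y K + tail_exp_moment B K)) at_top" if "K \<ge> 0" for K
    using D[OF that] F_eventually_pos
  proof eventually_elim
    case (elim x)
    have "prob {\<omega>\<in>space M. A \<omega> * Y \<omega> + B \<omega> > x} / F x - u K x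
        = prob {\<omega>\<in>space M. A \<omega> * Y \<omega> + B \<omega> > x \<and> Y \<omega> > K \<and> B \<omega> > K} / F x"
      by (simp add: u_def prob_affine_split[of x K] add_divide_distrib)
    moreover have "prob {\<omega>\<in>space M. A \<omega> * Y \<omega> + B \<omega> > x \<and> Y \<omega> > K \<and> B \<omega> > K} / F x \<ge> 0"
      using elim(2) by simp
    ultimately show ?case
      using elim(1) by simp
  qed
  show ?thesis
    by (rule tendsto_of_approximations[where K'=0 and u=u and l=l, OF u_lim u_approx l_lim r_lim])
qed

end

theorem lemma6p1:
  fixes M :: "'s measure"
    and A B Y :: "'s \<Rightarrow> real"
    and f :: "real \<Rightarrow> real"
    and a b c cY :: real
  assumes "prob_space M"
    and A_meas: "A \<in> borel_measurable M"
    and B_meas: "B \<in> borel_measurable M"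
    and Y_meas: "Y \<in> borel_measurable M"
    and A_range: "measure M {\<omega> \<in> space M. 0 < A \<omega> \<and> A \<omega> \<le> 1} = 1"
    and "a > 0" and "b > 0" and "c < -1"
    and B_tail: "(\<lambda>x. measure M {\<omega> \<in> space M. B \<omega> > x}) \<sim>[at_top] (\<lambda>x. a * x powr c * exp (- b * x))"
    and cramer: "integral\<^sup>L M (\<lambda>\<omega>. exp (b * B \<omega>) * indicator {\<omega>. A \<omega> = 1} \<omega>) < 1"
    and f_meas: "f \<in> borel_measurable borel"
    and f_nonneg: "\<And>y. f y \<ge> 0"
    and f_lim: "\<And>y. ((\<lambda>x. measure M {\<omega> \<in> space M. A \<omega> * y + B \<omega> > x}
                          / measure M {\<omega> \<in> space M. B \<omega> > x}) \<longlongrightarrow> f y) at_top"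
    and indep: "prob_space.indep_set M
        {(\<lambda>\<omega>. (A \<omega>, B \<omega>)) -` S \<inter> space M | S. S \<in> sets (borel \<Otimes>\<^sub>M borel)}
        {Y -` S \<inter> space M | S. S \<in> sets borel}"
    and "cY > 0"
    and Y_tail: "((\<lambda>x. measure M {\<omega> \<in> space M. Y \<omega> > x}
                     / measure M {\<omega> \<in> space M. B \<omega> > x}) \<longlongrightarrow> cY) at_top"
  shows "integrable M (\<lambda>\<omega>. f (Y \<omega>)) \<and>
         ((\<lambda>x. measure M {\<omega> \<in> space M. A \<omega> * Y \<omega> + B \<omega> > x}
               / measure M {\<omega> \<in> space M. B \<omega> > x})
          \<longlongrightarrow> cY * integral\<^sup>L M (\<lambda>\<omega>. exp (b * B \<omega>) * indicator {\<omega>. A \<omega> = 1} \<omega>)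
              + integral\<^sup>L M (\<lambda>\<omega>. f (Y \<omega>))) at_top"
proof -
  interpret affine_exp_tail M A B Y f a b c cY
    by (intro affine_exp_tail.intro affine_exp_tail_axioms.intro) (use assms in simp_all)
  show ?thesis
    using integrable_f_Y tendsto_affine_tail_ratio unfolding F_def by simp
qed

end
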